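(* Let $R$ be a commutative ring, $n$ a positive integer, and $x_1,\dots,x_{n+1}\in J(R)$. Then the ideal $x_1\cdots x_{n+1}R$ is a weakly $n$-absorbing ideal of $R$ if and only if $x_1\cdots x_{n+1}=0$.
   Context: All rings are commutative with $1\neq0$. $J(R)$ denotes the intersection of all maximal ideals of $R$. A proper ideal $I$ of $R$ is weakly $n$-absorbing if whenever $0\neq a_1\cdots a_{n+1}\in I$ with $a_1,\dots,a_{n+1}\in R$, there are $n$ of the $a_i$'s whose product is in $I$. *)

theory Defs
  imports Main
begin

definition is_ideal :: "'a::comm_ring_1 set \<Rightarrow> bool" where
  "is_ideal I \<longleftrightarrow> 0 \<in> I \<and> (\<forall>a\<in>I. \<forall>b\<in>I. a + b \<in> I) \<and> (\<forall>r a. a \<in> I \<longrightarrow> r * a \<in> I)"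

definition maximal_ideal :: "'a::comm_ring_1 set \<Rightarrow> bool" where
  "maximal_ideal M \<longleftrightarrow> is_ideal M \<and> M \<noteq> UNIV \<and>
     (\<forall>J. is_ideal J \<and> M \<subseteq> J \<longrightarrow> J = M \<or> J = UNIV)"

definition jacobson :: "'a::comm_ring_1 set" where
  "jacobson = \<Inter> {M. maximal_ideal M}"

definition principal_ideal :: "'a::comm_ring_1 \<Rightarrow> 'a set" where
  "principal_ideal c = {c * r | r. True}"

definition weakly_n_absorbing :: "nat \<Rightarrow> 'a::comm_ring_1 set \<Rightarrow> bool" where
  "weakly_n_absorbing n I \<longleftrightarrow> is_ideal I \<and> I \<noteq> UNIV \<and>
     (\<forall>a :: nat \<Rightarrow> 'a. (\<Prod>i<Suc n. a i) \<noteq> 0 \<and> (\<Prod>i<Suc n. a i) \<in> I \<longrightarrow>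
        (\<exists>j<Suc n. (\<Prod>i\<in>{..<Suc n} - {j}. a i) \<in> I))"

end

theory Submission
  imports Defs
begin

text \<open>If \<open>c = x\<^sub>1 \<cdots> x\<^sub>n\<^sub>+\<^sub>1 \<noteq> 0\<close> and \<open>cR\<close> is weakly \<open>n\<close>-absorbing, then applying the
  definition to \<open>c \<in> cR\<close> itself gives an index \<open>j\<close> with \<open>p = \<Prod>\<^sub>i\<^sub>\<noteq>\<^sub>j x\<^sub>i \<in> x\<^sub>j p R\<close>,
  say \<open>p = x\<^sub>j p r\<close>. Then \<open>p (1 - x\<^sub>j r) = 0\<close>, and \<open>1 - x\<^sub>j r\<close> is a unit because
  \<open>x\<^sub>j \<in> J(R)\<close>, so \<open>p = 0\<close> and hence \<open>c = 0\<close>.\<close>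

lemma is_ideal_eq_UNIV_iff:
  assumes "is_ideal I"
  shows "I = UNIV \<longleftrightarrow> 1 \<in> I"
  using assms unfolding is_ideal_def by (metis UNIV_I UNIV_eq_I mult.right_neutral)

lemma mem_principal_ideal_iff: "a \<in> principal_ideal c \<longleftrightarrow> c dvd a"
  unfolding principal_ideal_def dvd_def by auto

lemma is_ideal_principal_ideal: "is_ideal (principal_ideal c)"
  unfolding is_ideal_def by (simp add: mem_principal_ideal_iff)

lemma principal_ideal_zero: "principal_ideal 0 = {0}"
  unfolding principal_ideal_def by auto

lemma is_ideal_Union_chain:
  assumes "C \<noteq> {}"
    and "\<And>I. I \<in> C \<Longrightarrow> is_ideal I"
    and "\<And>I J. I \<in> C \<Longrightarrow> J \<in> C \<Longrightarrow> I \<subseteq> J \<or> J \<subseteq> I"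
  shows "is_ideal (\<Union>C)"
  unfolding is_ideal_def
proof (intro conjI ballI allI impI)
  show "0 \<in> \<Union>C"
    using assms(1,2) unfolding is_ideal_def by blast
  show "a + b \<in> \<Union>C" if a: "a \<in> \<Union>C" and b: "b \<in> \<Union>C" for a b
  proof -
    obtain I J where "I \<in> C" "J \<in> C" "a \<in> I" "b \<in> J"
      using a b by blast
    with assms(2) assms(3)[of I J] show ?thesis
      unfolding is_ideal_def by blast
  qed
  show "r * a \<in> \<Union>C" if "a \<in> \<Union>C" for r a
    using that assms(2) unfolding is_ideal_def by blast
qed

lemma proper_ideal_subset_maximal_ideal:
  fixes I :: "'a::comm_ring_1 set"
  assumes "is_ideal I" and "1 \<notin> I"
  obtains M where "maximal_ideal M" and "I \<subseteq> M"
proof -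
  define \<A> where "\<A> = {J::'a set. is_ideal J \<and> I \<subseteq> J \<and> 1 \<notin> J}"
  have "\<exists>M\<in>\<A>. \<forall>J\<in>\<A>. M \<subseteq> J \<longrightarrow> J = M"
  proof (rule subset_Zorn_nonempty)
    show "\<A> \<noteq> {}"
      using assms unfolding \<A>_def by blast
    show "\<Union>C \<in> \<A>" if "C \<noteq> {}" and "subset.chain \<A> C" for C
      using that is_ideal_Union_chain[of C]
      unfolding \<A>_def subset.chain_def by blast
  qed
  then obtain M where M: "M \<in> \<A>" and max: "\<forall>J\<in>\<A>. M \<subseteq> J \<longrightarrow> J = M" ..
  have "maximal_ideal M"
    unfolding maximal_ideal_def
  proof (intro conjI allI impI)
    show "is_ideal M" and "M \<noteq> UNIV"
      using M unfolding \<A>_def by auto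
    show "J = M \<or> J = UNIV" if "is_ideal J \<and> M \<subseteq> J" for J
      using that M max is_ideal_eq_UNIV_iff[of J] unfolding \<A>_def by blast
  qed
  then show ?thesis
    using M that unfolding \<A>_def by blast
qed

lemma non_unit_in_maximal_ideal:
  fixes u :: "'a::comm_ring_1"
  assumes "\<not> u dvd 1"
  obtains M where "maximal_ideal M" and "u \<in> M"
proof -
  have "1 \<notin> principal_ideal u" and "u \<in> principal_ideal u"
    using assms by (simp_all add: mem_principal_ideal_iff)
  then show ?thesis
    using proper_ideal_subset_maximal_ideal[OF is_ideal_principal_ideal] that by blast
qed

lemma jacobson_one_minus_mult_unit:
  fixes x :: "'a::comm_ring_1"
  assumes "x \<in> jacobson"
  shows "(1 - x * r) dvd 1"
proof (rule ccontr)
  assume "\<not> (1 - x * r) dvd 1"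
  then obtain M where M: "maximal_ideal M" and "1 - x * r \<in> M"
    by (rule non_unit_in_maximal_ideal)
  have ideal: "is_ideal M" and proper: "M \<noteq> UNIV"
    using M unfolding maximal_ideal_def by simp_all
  have "x \<in> M"
    using assms M unfolding jacobson_def by blast
  with \<open>1 - x * r \<in> M\<close> ideal have "(1 - x * r) + r * x \<in> M"
    unfolding is_ideal_def by blast
  then have "1 \<in> M"
    by (simp add: mult.commute)
  with ideal proper show False
    using is_ideal_eq_UNIV_iff by blast
qed

lemma jacobson_mult_dvd_imp_zero:
  fixes x p :: "'a::comm_ring_1"
  assumes "x \<in> jacobson" and "x * p dvd p"
  shows "p = 0"
proof -
  obtain r where "p = x * p * r"
    using assms(2) by (rule dvdE)
  then have "p * (1 - x * r) = 0"
    by (simp add: algebra_simps)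
  moreover obtain v where "1 = (1 - x * r) * v"
    using jacobson_one_minus_mult_unit[OF assms(1)] by (rule dvdE)
  ultimately show "p = 0"
    by (metis mult.assoc mult.right_neutral mult_zero_left)
qed

lemma weakly_n_absorbing_zero_ideal: "weakly_n_absorbing n {0}"
proof -
  have "{0::'a} \<noteq> UNIV"
    by (metis UNIV_I singletonD zero_neq_one)
  then show ?thesis
    unfolding weakly_n_absorbing_def is_ideal_def by simp
qed

theorem mainTheorem18:
  fixes x :: "nat \<Rightarrow> 'a::comm_ring_1" and n :: nat
  assumes "n \<ge> 1"
    and "\<forall>i<Suc n. x i \<in> jacobson"
  shows "weakly_n_absorbing n (principal_ideal (\<Prod>i<Suc n. x i)) \<longleftrightarrow> (\<Prod>i<Suc n. x i) = 0"
proof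
  let ?c = "\<Prod>i<Suc n. x i"
  assume absorbing: "weakly_n_absorbing n (principal_ideal ?c)"
  show "?c = 0"
  proof (rule ccontr)
    assume "?c \<noteq> 0"
    moreover have "?c \<in> principal_ideal ?c"
      by (simp add: mem_principal_ideal_iff)
    ultimately obtain j where j: "j < Suc n"
      and dvd: "?c dvd (\<Prod>i\<in>{..<Suc n} - {j}. x i)"
      using absorbing unfolding weakly_n_absorbing_def mem_principal_ideal_iff by blast
    have c_eq: "?c = x j * (\<Prod>i\<in>{..<Suc n} - {j}. x i)"
      using j by (metis finite_lessThan lessThan_iff prod.remove)
    have "(\<Prod>i\<in>{..<Suc n} - {j}. x i) = 0"
      using assms(2) j dvd unfolding c_eq by (blast intro: jacobson_mult_dvd_imp_zero)
    with \<open>?c \<noteq> 0\<close> show False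
      unfolding c_eq by simp
  qed
next
  assume "(\<Prod>i<Suc n. x i) = 0"
  then show "weakly_n_absorbing n (principal_ideal (\<Prod>i<Suc n. x i))"
    by (simp add: principal_ideal_zero weakly_n_absorbing_zero_ideal)
qed

end
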